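(* Let $\mathcal{M}=(l;\mathcal{V})$ and $\mathcal{M}'=(l';\mathcal{V})$ be semi-parametric models over $\Omega$ with $\mathcal{M}\sim\mathcal{M}'$, and for $\gamma>0$ consider the families $\mathcal{M}(\gamma)=(\gamma l;\mathcal{V})$ and $\mathcal{M}'(\gamma)=(\gamma l';\mathcal{V})$. Then for any data $\mathbf{y}$ (observed at measurement locations $\mathcal{X}$) and noise variance $\sigma^2$, the values of the leave-one-out squared-error criterion, the leave-one-out negative log-likelihood criterion and the SURE criterion are the same for $\mathcal{M}(\gamma)$ and $\mathcal{M}'(\gamma)$, for every $\gamma$. Consequently, if $\gamma^\star$ is an optimal value of the criterion for the family $\mathcal{M}(\gamma)$, it is an optimal value for $\mathcal{M}'(\gamma)$, and the selected models $\mathcal{M}(\gamma^\star)$ and $\mathcal{M}'(\gamma^\star)$ are prediction-equivalent.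
   Context: SPM: a pair $(l;\mathcal{V})$, $\mathcal{V}=\{v_1,\ldots,v_m\}$ linearly independent functions on $\Omega$, $l$ symmetric and conditionally positive semi-definite w.r.t. $\mathcal{V}$ (for every finite $\mathcal{X}$ unisolvent for $\mathcal{V}$, i.e. with basis matrix $\mathbf{V}=[v_j(x_i)]$ of full column rank, $\widetilde{\mathbf{L}}=(\mathbf{I}-\mathbf{Q}\mathbf{Q}^\top)\mathbf{L}(\mathbf{I}-\mathbf{Q}\mathbf{Q}^\top)\succeq0$ where $\mathbf{Q}$ is an orthonormal basis of $\mathrm{span}\,\mathbf{V}$ and $\mathbf{L}=[l(x_i,x_j)]$). Predictive mean and variance at $x$ given observations $\mathbf{y}$ at unisolvent $\mathcal{X}$ with noise variance $\sigma^2$: $\mathbb{E}(f(x)\mid\mathbf{y})=(\mathbf{l}_{x,\mathcal{X}}\ \mathbf{v}_x)\mathbf{S}^{-1}\binom{\mathbf{y}}{\mathbf{0}}$, $\mathrm{Var}(f(x)\mid\mathbf{y})=l(x,x)-(\mathbf{l}_{x,\mathcal{X}}\ \mathbf{v}_x)\mathbf{S}^{-1}\binom{\mathbf{l}_{x,\mathcal{X}}^\top}{\mathbf{v}_x^\top}$, $\mathbf{S}=\begin{pmatrix}\mathbf{L}+\sigma^2\mathbf{I}&\mathbf{V}\\ \mathbf{V}^\top&\mathbf{0}\end{pmatrix}$. Smoother matrix: $\mathbf{M}=\mathbf{Q}\mathbf{Q}^\top+\widetilde{\mathbf{L}}(\widetilde{\mathbf{L}}+\sigma^2\mathbf{I})^{-1}$.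 $\mathcal{M}\sim\mathcal{M}'$ means $|\mathcal{V}|=|\mathcal{V}'|$ and equal predictive means and variances for every finite unisolvent $\mathcal{X}$, all $x,\mathbf{y},\sigma^2>0$. Selection criteria (for $n$ observations $y_i$ at $x_i$, with $\mathbf{y}_{-i}$ the data without the $i$-th observation): LOO squared error $C_{\mathrm{loo\text{-}mse}}=\frac1n\sum_i\big(y_i-\mathbb{E}(f(x_i)\mid\mathbf{y}_{-i})\big)^2$; LOO negative log-likelihood $C_{\mathrm{loo\text{-}nll}}=\frac1n\sum_i\big\{\frac12\log(2\pi\,\mathrm{Var}(y_i\mid\mathbf{y}_{-i}))+\frac{(y_i-\mathbb{E}(y_i\mid\mathbf{y}_{-i}))^2}{2\mathrm{Var}(y_i\mid\mathbf{y}_{-i})}\big\}$, where $y_i\mid\mathbf{y}_{-i}$ is Gaussian with mean $\mathbb{E}(f(x_i)\mid\mathbf{y}_{-i})$ and variance $\mathrm{Var}(f(x_i)\mid\mathbf{y}_{-i})+\sigma^2$; SURE $C_{\mathrm{SURE}}=-\sigma^2+\frac1n\sum_i(y_i-(\mathbf{M}\mathbf{y})_i)^2+\frac{2\sigma^2}{n}\mathrm{Tr}\,\mathbf{M}$. *)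

theory Defs
  imports "HOL-Analysis.Analysis" "Jordan_Normal_Form.Gauss_Jordan_Elimination"
begin

text \<open>Omega is modelled by an arbitrary type 'a.  A finite set of measurement
locations X = {x_1,...,x_n} is a list of distinct points; the function basis
V = {v_1,...,v_m} is a list of functions.\<close>

definition minv :: "real mat \<Rightarrow> real mat" where
  "minv A = (case mat_inverse A of Some B \<Rightarrow> B | None \<Rightarrow> 0\<^sub>m (dim_row A) (dim_row A))"

definition mtrace :: "real mat \<Rightarrow> real" where
  "mtrace A = (\<Sum>i<dim_row A. A $$ (i,i))"

definition psd :: "real mat \<Rightarrow> bool" where
  "psd A \<longleftrightarrow> (\<forall>x \<in> carrier_vec (dim_row A). x \<bullet> (A *\<^sub>v x) \<ge> 0)"

definition basis_mat :: "('a \<Rightarrow> real) list \<Rightarrow> 'a list \<Rightarrow> real mat" where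
  "basis_mat vs xs = mat (length xs) (length vs) (\<lambda>(i,j). (vs ! j) (xs ! i))"

definition kern_mat :: "('a \<Rightarrow> 'a \<Rightarrow> real) \<Rightarrow> 'a list \<Rightarrow> real mat" where
  "kern_mat l xs = mat (length xs) (length xs) (\<lambda>(i,j). l (xs ! i) (xs ! j))"

definition unisolvent :: "('a \<Rightarrow> real) list \<Rightarrow> 'a list \<Rightarrow> bool" where
  "unisolvent vs xs \<longleftrightarrow> distinct xs \<and>
     (\<forall>c \<in> carrier_vec (length vs). basis_mat vs xs *\<^sub>v c = 0\<^sub>v (length xs) \<longrightarrow> c = 0\<^sub>v (length vs))"

text \<open>Q Q^T for an orthonormal basis Q of span V equals V (V^T V)^{-1} V^T.\<close>
definition proj_V :: "('a \<Rightarrow> real) list \<Rightarrow> 'a list \<Rightarrow> real mat" where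
  "proj_V vs xs = (let V = basis_mat vs xs in V * minv (V\<^sup>T * V) * V\<^sup>T)"

definition Ltilde :: "('a \<Rightarrow> 'a \<Rightarrow> real) \<Rightarrow> ('a \<Rightarrow> real) list \<Rightarrow> 'a list \<Rightarrow> real mat" where
  "Ltilde l vs xs = (let n = length xs; R = 1\<^sub>m n - proj_V vs xs in R * kern_mat l xs * R)"

definition lin_indep_funs :: "('a \<Rightarrow> real) list \<Rightarrow> bool" where
  "lin_indep_funs vs \<longleftrightarrow>
     (\<forall>c :: nat \<Rightarrow> real. (\<forall>x. (\<Sum>j<length vs. c j * (vs ! j) x) = 0) \<longrightarrow> (\<forall>j<length vs. c j = 0))"

definition cond_psd :: "('a \<Rightarrow> 'a \<Rightarrow> real) \<Rightarrow> ('a \<Rightarrow> real) list \<Rightarrow> bool" where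
  "cond_psd l vs \<longleftrightarrow> (\<forall>xs. unisolvent vs xs \<longrightarrow> psd (Ltilde l vs xs))"

definition spm :: "('a \<Rightarrow> 'a \<Rightarrow> real) \<Rightarrow> ('a \<Rightarrow> real) list \<Rightarrow> bool" where
  "spm l vs \<longleftrightarrow> lin_indep_funs vs \<and> (\<forall>x y. l x y = l y x) \<and> cond_psd l vs"

definition S_mat :: "('a \<Rightarrow> 'a \<Rightarrow> real) \<Rightarrow> ('a \<Rightarrow> real) list \<Rightarrow> 'a list \<Rightarrow> real \<Rightarrow> real mat" where
  "S_mat l vs xs s2 = (let n = length xs; m = length vs; V = basis_mat vs xs in
     four_block_mat (kern_mat l xs + s2 \<cdot>\<^sub>m 1\<^sub>m n) V (V\<^sup>T) (0\<^sub>m m m))"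

definition lv_vec :: "('a \<Rightarrow> 'a \<Rightarrow> real) \<Rightarrow> ('a \<Rightarrow> real) list \<Rightarrow> 'a list \<Rightarrow> 'a \<Rightarrow> real vec" where
  "lv_vec l vs xs x = vec (length xs + length vs)
     (\<lambda>k. if k < length xs then l x (xs ! k) else (vs ! (k - length xs)) x)"

definition pred_mean :: "('a \<Rightarrow> 'a \<Rightarrow> real) \<Rightarrow> ('a \<Rightarrow> real) list \<Rightarrow> 'a list \<Rightarrow> real list \<Rightarrow> real \<Rightarrow> 'a \<Rightarrow> real" where
  "pred_mean l vs xs ys s2 x = lv_vec l vs xs x \<bullet>
     (minv (S_mat l vs xs s2) *\<^sub>v vec (length xs + length vs) (\<lambda>k. if k < length xs then ys ! k else 0))"

definition pred_var :: "('a \<Rightarrow> 'a \<Rightarrow> real) \<Rightarrow> ('a \<Rightarrow> real) list \<Rightarrow> 'a list \<Rightarrow> real \<Rightarrow> 'a \<Rightarrow> real" where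
  "pred_var l vs xs s2 x = l x x - lv_vec l vs xs x \<bullet> (minv (S_mat l vs xs s2) *\<^sub>v lv_vec l vs xs x)"

definition spm_equiv :: "('a \<Rightarrow> 'a \<Rightarrow> real) \<Rightarrow> ('a \<Rightarrow> real) list \<Rightarrow> ('a \<Rightarrow> 'a \<Rightarrow> real) \<Rightarrow> ('a \<Rightarrow> real) list \<Rightarrow> bool" where
  "spm_equiv l vs l' vs' \<longleftrightarrow> length vs = length vs' \<and>
     (\<forall>xs ys s2 x. unisolvent vs xs \<longrightarrow> unisolvent vs' xs \<longrightarrow> length ys = length xs \<longrightarrow> s2 > 0 \<longrightarrow>
        pred_mean l vs xs ys s2 x = pred_mean l' vs' xs ys s2 x \<and>
        pred_var l vs xs s2 x = pred_var l' vs' xs s2 x)"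

definition del_nth :: "nat \<Rightarrow> 'b list \<Rightarrow> 'b list" where
  "del_nth i zs = take i zs @ drop (Suc i) zs"

definition C_loo_mse :: "('a \<Rightarrow> 'a \<Rightarrow> real) \<Rightarrow> ('a \<Rightarrow> real) list \<Rightarrow> 'a list \<Rightarrow> real list \<Rightarrow> real \<Rightarrow> real" where
  "C_loo_mse l vs xs ys s2 = (1 / real (length xs)) *
     (\<Sum>i<length xs. (ys ! i - pred_mean l vs (del_nth i xs) (del_nth i ys) s2 (xs ! i))\<^sup>2)"

definition C_loo_nll :: "('a \<Rightarrow> 'a \<Rightarrow> real) \<Rightarrow> ('a \<Rightarrow> real) list \<Rightarrow> 'a list \<Rightarrow> real list \<Rightarrow> real \<Rightarrow> real" where
  "C_loo_nll l vs xs ys s2 = (1 / real (length xs)) *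
     (\<Sum>i<length xs.
        let mu = pred_mean l vs (del_nth i xs) (del_nth i ys) s2 (xs ! i);
            v = pred_var l vs (del_nth i xs) s2 (xs ! i) + s2
        in (1/2) * ln (2 * pi * v) + (ys ! i - mu)\<^sup>2 / (2 * v))"

definition smoother :: "('a \<Rightarrow> 'a \<Rightarrow> real) \<Rightarrow> ('a \<Rightarrow> real) list \<Rightarrow> 'a list \<Rightarrow> real \<Rightarrow> real mat" where
  "smoother l vs xs s2 = proj_V vs xs +
     Ltilde l vs xs * minv (Ltilde l vs xs + s2 \<cdot>\<^sub>m 1\<^sub>m (length xs))"

definition C_SURE :: "('a \<Rightarrow> 'a \<Rightarrow> real) \<Rightarrow> ('a \<Rightarrow> real) list \<Rightarrow> 'a list \<Rightarrow> real list \<Rightarrow> real \<Rightarrow> real" where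
  "C_SURE l vs xs ys s2 = (let n = length xs; M = smoother l vs xs s2; yv = vec_of_list ys in
     - s2 + (1 / real n) * (\<Sum>i<n. (ys ! i - (M *\<^sub>v yv) $ i)\<^sup>2) + (2 * s2 / real n) * mtrace M)"

definition scale_kernel :: "real \<Rightarrow> ('a \<Rightarrow> 'a \<Rightarrow> real) \<Rightarrow> 'a \<Rightarrow> 'a \<Rightarrow> real" where
  "scale_kernel g l = (\<lambda>x y. g * l x y)"

definition optimal_gamma :: "(real \<Rightarrow> real) \<Rightarrow> real \<Rightarrow> bool" where
  "optimal_gamma C g \<longleftrightarrow> g > 0 \<and> (\<forall>h>0. C g \<le> C h)"

end

theory Submission
  imports Defs "Jordan_Normal_Form.Determinant"
begin

(* Scaling both the kernel and the noise variance by g turns the saddle-point matrix S into a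
   matrix S' with S' (z1, g z2) = (g b1, b2) whenever S (z1, z2) = (b1, b2).  Hence the
   model (g l; V) with noise s predicts the mean of (l; V) with noise s / g and g times its
   variance, so prediction equivalence survives the scaling.  Both LOO criteria are built from
   predictive means and variances only.  The smoother applied to y returns the predictive means
   at the data points, so it is determined by the predictive means as well, and with it the
   SURE criterion. *)

lemma minv_carrier_mat: "A \<in> carrier_mat n n \<Longrightarrow> minv A \<in> carrier_mat n n"
  unfolding minv_def using mat_inverse(2)[of A n] by (auto split: option.splits)

lemma minv_inverse:
  assumes A: "A \<in> carrier_mat n n"
    and ker: "\<And>v. v \<in> carrier_vec n \<Longrightarrow> A *\<^sub>v v = 0\<^sub>v n \<Longrightarrow> v = 0\<^sub>v n"
  shows "A * minv A = 1\<^sub>m n" "minv A * A = 1\<^sub>m n"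
proof -
  have "det A \<noteq> 0" using det_0_iff_vec_prod_zero[OF A] ker by blast
  then have "mat_inverse A \<noteq> None"
    using det_non_zero_imp_unit[OF A, of "()"] mat_inverse(1)[OF A, where b = "()"] by blast
  then obtain B where B: "mat_inverse A = Some B" by blast
  then show "A * minv A = 1\<^sub>m n" "minv A * A = 1\<^sub>m n"
    using mat_inverse(2)[OF A B] unfolding minv_def by simp_all
qed

lemma mult_minv_mult_vec:
  assumes A: "A \<in> carrier_mat n n"
    and ker: "\<And>v. v \<in> carrier_vec n \<Longrightarrow> A *\<^sub>v v = 0\<^sub>v n \<Longrightarrow> v = 0\<^sub>v n"
    and b: "b \<in> carrier_vec n"
  shows "A *\<^sub>v (minv A *\<^sub>v b) = b"
  using assoc_mult_mat_vec[OF A minv_carrier_mat[OF A] b] minv_inverse(1)[OF A ker] b by simp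

lemma minv_mult_vec_eqI:
  assumes A: "A \<in> carrier_mat n n"
    and ker: "\<And>v. v \<in> carrier_vec n \<Longrightarrow> A *\<^sub>v v = 0\<^sub>v n \<Longrightarrow> v = 0\<^sub>v n"
    and z: "z \<in> carrier_vec n" and Az: "A *\<^sub>v z = b"
  shows "minv A *\<^sub>v b = z"
  using assoc_mult_mat_vec[OF minv_carrier_mat[OF A] A z] minv_inverse(2)[OF A ker] z Az by simp

lemma mult_mat_vec_zero [simp]: "A \<in> carrier_mat nr nc \<Longrightarrow> A *\<^sub>v 0\<^sub>v nc = 0\<^sub>v nr"
  by (intro eq_vecI) (auto simp: scalar_prod_def)

lemma zero_mult_mat_vec [simp]: "v \<in> carrier_vec nc \<Longrightarrow> 0\<^sub>m nr nc *\<^sub>v v = 0\<^sub>v nr"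
  by (intro eq_vecI) (auto simp: scalar_prod_def)

lemma smult_mat_mult_vec:
  "A \<in> carrier_mat nr nc \<Longrightarrow> v \<in> carrier_vec nc \<Longrightarrow> (k \<cdot>\<^sub>m A) *\<^sub>v v = k \<cdot>\<^sub>v (A *\<^sub>v v)"
  by (intro eq_vecI) (auto simp: scalar_prod_def sum_distrib_left mult.assoc)

lemma zero_vec_append: "0\<^sub>v (n1 + n2) = 0\<^sub>v n1 @\<^sub>v 0\<^sub>v n2"
  by (intro eq_vecI) auto

lemma add_smult_one_mult_vec:
  fixes A :: "real mat"
  assumes A: "A \<in> carrier_mat n n" and w: "w \<in> carrier_vec n"
  shows "(A + s \<cdot>\<^sub>m 1\<^sub>m n) *\<^sub>v w = A *\<^sub>v w + s \<cdot>\<^sub>v w"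
  using add_mult_distrib_mat_vec[OF A _ w, of "s \<cdot>\<^sub>m 1\<^sub>m n"] smult_mat_mult_vec[OF one_carrier_mat w]
    one_mult_mat_vec[OF w] by simp

lemma mat_eq_by_mult_vec:
  fixes A B :: "real mat"
  assumes A: "A \<in> carrier_mat nr nc" and B: "B \<in> carrier_mat nr nc"
    and eq: "\<And>v. v \<in> carrier_vec nc \<Longrightarrow> A *\<^sub>v v = B *\<^sub>v v"
  shows "A = B"
proof (rule eq_matI)
  fix i j assume "i < dim_row B" "j < dim_col B"
  then show "A $$ (i, j) = B $$ (i, j)"
    using arg_cong[OF eq[OF unit_vec_carrier[of nc j]], of "\<lambda>v. v $ i"] A B by simp
qed (use A B in auto)

lemma psd_form_add_square_eq_0:
  fixes A :: "real mat"
  assumes "A \<in> carrier_mat n n" and "psd A" and "s > 0" and x: "x \<in> carrier_vec n"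
    and "x \<bullet> (A *\<^sub>v x) + s * (x \<bullet> x) = 0"
  shows "x = 0\<^sub>v n"
proof -
  have "x \<bullet> (A *\<^sub>v x) \<ge> 0" using assms unfolding psd_def by auto
  moreover have "x \<bullet> x \<ge> 0" using conjugate_square_ge_0_vec[of x] by simp
  ultimately have "x \<bullet> x = 0" using assms by (smt (verit) mult_pos_pos)
  then show ?thesis using conjugate_square_eq_0_vec[OF x] by simp
qed

lemma psd_smult:
  fixes A :: "real mat"
  assumes A: "A \<in> carrier_mat n n" and "psd A" and "g \<ge> 0"
  shows "psd (g \<cdot>\<^sub>m A)"
  unfolding psd_def
proof
  fix x :: "real Matrix.vec" assume "x \<in> carrier_vec (dim_row (g \<cdot>\<^sub>m A))"
  then have x: "x \<in> carrier_vec n" using A by simp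
  have "x \<bullet> ((g \<cdot>\<^sub>m A) *\<^sub>v x) = g * (x \<bullet> (A *\<^sub>v x))"
    using smult_mat_mult_vec[OF A x] A x by simp
  moreover have "x \<bullet> (A *\<^sub>v x) \<ge> 0" using assms x unfolding psd_def by simp
  ultimately show "x \<bullet> ((g \<cdot>\<^sub>m A) *\<^sub>v x) \<ge> 0" using \<open>g \<ge> 0\<close> by simp
qed

lemma basis_mat_carrier: "basis_mat vs xs \<in> carrier_mat (length xs) (length vs)"
  unfolding basis_mat_def by simp

lemma kern_mat_carrier: "kern_mat l xs \<in> carrier_mat (length xs) (length xs)"
  unfolding kern_mat_def by simp

lemma proj_V_carrier: "proj_V vs xs \<in> carrier_mat (length xs) (length xs)"
proof -
  have V: "basis_mat vs xs \<in> carrier_mat (length xs) (length vs)" by (rule basis_mat_carrier)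
  then have Vt: "(basis_mat vs xs)\<^sup>T \<in> carrier_mat (length vs) (length xs)" by simp
  have "minv ((basis_mat vs xs)\<^sup>T * basis_mat vs xs) \<in> carrier_mat (length vs) (length vs)"
    using mult_carrier_mat[OF Vt V] by (rule minv_carrier_mat)
  then show ?thesis
    unfolding proj_V_def Let_def using V Vt by (meson mult_carrier_mat)
qed

lemma residual_carrier: "1\<^sub>m (length xs) - proj_V vs xs \<in> carrier_mat (length xs) (length xs)"
  using proj_V_carrier by (rule minus_carrier_mat)

lemma Ltilde_carrier: "Ltilde l vs xs \<in> carrier_mat (length xs) (length xs)"
  unfolding Ltilde_def Let_def
  using mult_carrier_mat[OF mult_carrier_mat[OF residual_carrier kern_mat_carrier] residual_carrier] .

lemma kern_mat_scale_kernel: "kern_mat (scale_kernel g l) xs = g \<cdot>\<^sub>m kern_mat l xs"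
  by (intro eq_matI) (auto simp: kern_mat_def scale_kernel_def)

lemma shifted_kern_mat_scale_kernel:
  "kern_mat (scale_kernel g l) xs + (g * s) \<cdot>\<^sub>m 1\<^sub>m (length xs)
     = g \<cdot>\<^sub>m (kern_mat l xs + s \<cdot>\<^sub>m 1\<^sub>m (length xs))"
  by (intro eq_matI) (auto simp: kern_mat_def scale_kernel_def algebra_simps)

lemma Ltilde_scale_kernel: "Ltilde (scale_kernel g l) vs xs = g \<cdot>\<^sub>m Ltilde l vs xs"
proof -
  let ?R = "1\<^sub>m (length xs) - proj_V vs xs" and ?L = "kern_mat l xs"
  have R: "?R \<in> carrier_mat (length xs) (length xs)" by (rule residual_carrier)
  have RL: "?R * ?L \<in> carrier_mat (length xs) (length xs)"
    using R kern_mat_carrier by (rule mult_carrier_mat)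
  show ?thesis
    unfolding Ltilde_def Let_def kern_mat_scale_kernel
    using mult_smult_distrib[OF R kern_mat_carrier, of g] mult_smult_assoc_mat[OF RL R, of g] by simp
qed

lemma psd_Ltilde_scale_kernel:
  "psd (Ltilde l vs xs) \<Longrightarrow> g \<ge> 0 \<Longrightarrow> psd (Ltilde (scale_kernel g l) vs xs)"
  unfolding Ltilde_scale_kernel using Ltilde_carrier by (rule psd_smult)

lemma spm_scale_kernel:
  assumes "spm l vs" and "g > 0"
  shows "spm (scale_kernel g l) vs"
  using assms psd_Ltilde_scale_kernel[of l vs _ g]
  unfolding spm_def cond_psd_def by (auto simp: scale_kernel_def)

lemma lv_vec_append:
  "lv_vec l vs xs x = vec (length xs) (\<lambda>k. l x (xs ! k)) @\<^sub>v vec (length vs) (\<lambda>j. (vs ! j) x)"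
  by (intro eq_vecI) (auto simp: lv_vec_def)

lemma lv_vec_scale_kernel:
  "lv_vec (scale_kernel g l) vs xs x
     = (g \<cdot>\<^sub>v vec (length xs) (\<lambda>k. l x (xs ! k))) @\<^sub>v vec (length vs) (\<lambda>j. (vs ! j) x)"
  by (intro eq_vecI) (auto simp: lv_vec_def scale_kernel_def)

lemma lv_vec_at_data:
  "i < length xs \<Longrightarrow> lv_vec l vs xs (xs ! i) = row (kern_mat l xs) i @\<^sub>v row (basis_mat vs xs) i"
  by (intro eq_vecI) (auto simp: lv_vec_def kern_mat_def basis_mat_def)

lemma data_vec_append:
  "vec (n + m) (\<lambda>k. if k < n then ys ! k else 0) = vec n (\<lambda>k. ys ! k) @\<^sub>v 0\<^sub>v m"
  by (intro eq_vecI) auto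

locale unisolvent_points =
  fixes vs :: "('a \<Rightarrow> real) list" and xs :: "'a list"
  assumes unisolvent: "unisolvent vs xs"
begin

abbreviation "n \<equiv> length xs"
abbreviation "m \<equiv> length vs"
abbreviation "V \<equiv> basis_mat vs xs"
abbreviation "G \<equiv> V\<^sup>T * V"
abbreviation "P \<equiv> proj_V vs xs"
abbreviation "R \<equiv> 1\<^sub>m n - P"

lemma V_carrier: "V \<in> carrier_mat n m" and Vt_carrier: "V\<^sup>T \<in> carrier_mat m n"
  using basis_mat_carrier by auto

lemma G_carrier: "G \<in> carrier_mat m m"
  using mult_carrier_mat[OF Vt_carrier V_carrier] .

lemma minv_G_carrier: "minv G \<in> carrier_mat m m"
  using G_carrier by (rule minv_carrier_mat)

lemma P_carrier: "P \<in> carrier_mat n n" and R_carrier: "R \<in> carrier_mat n n"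
  using proj_V_carrier residual_carrier .

lemma V_kernel: "b \<in> carrier_vec m \<Longrightarrow> V *\<^sub>v b = 0\<^sub>v n \<Longrightarrow> b = 0\<^sub>v m"
  using unisolvent unfolding unisolvent_def by blast

lemma G_kernel:
  assumes b: "b \<in> carrier_vec m" and Gb: "G *\<^sub>v b = 0\<^sub>v m"
  shows "b = 0\<^sub>v m"
proof -
  have Vb: "V *\<^sub>v b \<in> carrier_vec n" using V_carrier b by simp
  have "(V *\<^sub>v b) \<bullet> (V *\<^sub>v b) = (V\<^sup>T *\<^sub>v (V *\<^sub>v b)) \<bullet> b"
    using transpose_vec_mult_scalar[OF V_carrier b Vb] by simp
  also have "\<dots> = 0" using Gb b assoc_mult_mat_vec[OF Vt_carrier V_carrier b] by simp
  finally have "V *\<^sub>v b = 0\<^sub>v n" using conjugate_square_eq_0_vec[OF Vb] by simp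
  then show ?thesis using V_kernel b by blast
qed

lemma proj_mult_vec:
  assumes a: "a \<in> carrier_vec n"
  shows "P *\<^sub>v a = V *\<^sub>v (minv G *\<^sub>v (V\<^sup>T *\<^sub>v a))"
proof -
  have "V\<^sup>T *\<^sub>v a \<in> carrier_vec m" using Vt_carrier a by simp
  then show ?thesis
    unfolding proj_V_def Let_def
    using assoc_mult_mat_vec[OF mult_carrier_mat[OF V_carrier minv_G_carrier] Vt_carrier a]
      assoc_mult_mat_vec[OF V_carrier minv_G_carrier] by simp
qed

lemma proj_basis:
  assumes b: "b \<in> carrier_vec m"
  shows "P *\<^sub>v (V *\<^sub>v b) = V *\<^sub>v b"
proof -
  have "minv G *\<^sub>v (V\<^sup>T *\<^sub>v (V *\<^sub>v b)) = b"
    using minv_mult_vec_eqI[OF G_carrier G_kernel b refl]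
      assoc_mult_mat_vec[OF Vt_carrier V_carrier b] by simp
  then show ?thesis using proj_mult_vec[of "V *\<^sub>v b"] V_carrier b by simp
qed

lemma residual_mult_vec: "a \<in> carrier_vec n \<Longrightarrow> R *\<^sub>v a = a - P *\<^sub>v a"
  using minus_mult_distrib_mat_vec[OF one_carrier_mat P_carrier] by simp

lemma residual_basis: "b \<in> carrier_vec m \<Longrightarrow> R *\<^sub>v (V *\<^sub>v b) = 0\<^sub>v n"
  using residual_mult_vec[of "V *\<^sub>v b"] proj_basis V_carrier by auto

lemma residual_proj: "a \<in> carrier_vec n \<Longrightarrow> R *\<^sub>v (P *\<^sub>v a) = 0\<^sub>v n"
  using proj_mult_vec residual_basis minv_G_carrier Vt_carrier by simp

lemma residual_orthogonal:
  "a \<in> carrier_vec n \<Longrightarrow> V\<^sup>T *\<^sub>v a = 0\<^sub>v m \<Longrightarrow> R *\<^sub>v a = a"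
  using residual_mult_vec proj_mult_vec minv_G_carrier V_carrier by simp

lemma orthogonal_basis:
  assumes a: "a \<in> carrier_vec n" "V\<^sup>T *\<^sub>v a = 0\<^sub>v m" and b: "b \<in> carrier_vec m"
  shows "a \<bullet> (V *\<^sub>v b) = 0"
  using transpose_vec_mult_scalar[OF V_carrier b a(1)] a b by simp

lemma orthogonal_residual:
  assumes a: "a \<in> carrier_vec n" "V\<^sup>T *\<^sub>v a = 0\<^sub>v m" and w: "w \<in> carrier_vec n"
  shows "a \<bullet> (R *\<^sub>v w) = a \<bullet> w"
proof -
  have "a \<bullet> (P *\<^sub>v w) = 0"
    using proj_mult_vec[OF w] orthogonal_basis[OF a] minv_G_carrier Vt_carrier w by simp
  moreover have "P *\<^sub>v w \<in> carrier_vec n" using P_carrier w by simp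
  ultimately show ?thesis
    using residual_mult_vec[OF w] scalar_prod_minus_distrib[OF a(1) w] by simp
qed

end

locale spm_fit = unisolvent_points +
  fixes l :: "'a \<Rightarrow> 'a \<Rightarrow> real" and s :: real
  assumes psd_Ltilde: "psd (Ltilde l vs xs)" and noise_pos: "s > 0"
begin

abbreviation "L \<equiv> kern_mat l xs"
abbreviation "Lt \<equiv> Ltilde l vs xs"
abbreviation "Ls \<equiv> L + s \<cdot>\<^sub>m 1\<^sub>m n"
abbreviation "K \<equiv> Lt + s \<cdot>\<^sub>m 1\<^sub>m n"
abbreviation "S \<equiv> S_mat l vs xs s"

lemma L_carrier: "L \<in> carrier_mat n n" and Lt_carrier: "Lt \<in> carrier_mat n n"
  and Ls_carrier: "Ls \<in> carrier_mat n n" and K_carrier: "K \<in> carrier_mat n n"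
  using kern_mat_carrier Ltilde_carrier by auto

lemma S_carrier: "S \<in> carrier_mat (n + m) (n + m)"
  unfolding S_mat_def Let_def
  using four_block_carrier_mat[OF Ls_carrier zero_carrier_mat[of m m]] by simp

lemma Lt_mult_vec:
  assumes w: "w \<in> carrier_vec n"
  shows "Lt *\<^sub>v w = R *\<^sub>v (L *\<^sub>v (R *\<^sub>v w))"
proof -
  have "R *\<^sub>v w \<in> carrier_vec n" using R_carrier w by simp
  then show ?thesis
    unfolding Ltilde_def Let_def
    using assoc_mult_mat_vec[OF mult_carrier_mat[OF R_carrier L_carrier] R_carrier w]
      assoc_mult_mat_vec[OF R_carrier L_carrier] by simp
qed

lemma K_kernel:
  assumes a: "a \<in> carrier_vec n" and Ka: "K *\<^sub>v a = 0\<^sub>v n"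
  shows "a = 0\<^sub>v n"
proof (rule psd_form_add_square_eq_0[OF Lt_carrier psd_Ltilde noise_pos a])
  have "Lt *\<^sub>v a \<in> carrier_vec n" using Lt_carrier a by simp
  then have "a \<bullet> (K *\<^sub>v a) = a \<bullet> (Lt *\<^sub>v a) + s * (a \<bullet> a)"
    using add_smult_one_mult_vec[OF Lt_carrier a] scalar_prod_add_distrib[OF a] a by simp
  then show "a \<bullet> (Lt *\<^sub>v a) + s * (a \<bullet> a) = 0" using Ka a by simp
qed

lemma S_mult_append_eq:
  assumes z1: "z1 \<in> carrier_vec n" and z2: "z2 \<in> carrier_vec m" and b1: "b1 \<in> carrier_vec n"
  shows "S *\<^sub>v (z1 @\<^sub>v z2) = b1 @\<^sub>v b2 \<longleftrightarrow> Ls *\<^sub>v z1 + V *\<^sub>v z2 = b1 \<and> V\<^sup>T *\<^sub>v z1 = b2"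
proof -
  have "S *\<^sub>v (z1 @\<^sub>v z2) = (Ls *\<^sub>v z1 + V *\<^sub>v z2) @\<^sub>v (V\<^sup>T *\<^sub>v z1)"
    unfolding S_mat_def Let_def
    using four_block_mat_mult_vec[OF Ls_carrier V_carrier Vt_carrier zero_carrier_mat z1 z2]
      Vt_carrier z1 z2 by simp
  moreover have "Ls *\<^sub>v z1 + V *\<^sub>v z2 \<in> carrier_vec n"
    using Ls_carrier V_carrier z1 z2 by (meson add_carrier_vec mult_mat_vec_carrier)
  ultimately show ?thesis using append_vec_eq b1 by simp
qed

(* On the constraint space V\<^sup>T z1 = 0 the quadratic form of L coincides with that of the
   positive semi-definite Lt. *)
lemma S_kernel:
  assumes z: "z \<in> carrier_vec (n + m)" and Sz: "S *\<^sub>v z = 0\<^sub>v (n + m)"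
  shows "z = 0\<^sub>v (n + m)"
proof -
  define z1 z2 where "z1 = vec_first z n" and "z2 = vec_last z m"
  have z1: "z1 \<in> carrier_vec n" and z2: "z2 \<in> carrier_vec m" unfolding z1_def z2_def by auto
  have "z = z1 @\<^sub>v z2" unfolding z1_def z2_def using z by simp
  with Sz have eq: "Ls *\<^sub>v z1 + V *\<^sub>v z2 = 0\<^sub>v n" and orth: "V\<^sup>T *\<^sub>v z1 = 0\<^sub>v m"
    using S_mult_append_eq[OF z1 z2 zero_carrier_vec] by (simp_all add: zero_vec_append)
  have Lz: "L *\<^sub>v z1 \<in> carrier_vec n" and Vz: "V *\<^sub>v z2 \<in> carrier_vec n"
    using L_carrier V_carrier z1 z2 by auto
  have "0 = z1 \<bullet> (L *\<^sub>v z1 + s \<cdot>\<^sub>v z1 + V *\<^sub>v z2)"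
    using eq add_smult_one_mult_vec[OF L_carrier z1] z1 by simp
  also have "\<dots> = z1 \<bullet> (L *\<^sub>v z1) + s * (z1 \<bullet> z1) + z1 \<bullet> (V *\<^sub>v z2)"
    using scalar_prod_add_distrib[OF z1] Lz Vz z1 by simp
  also have "z1 \<bullet> (V *\<^sub>v z2) = 0" using orthogonal_basis[OF z1 orth z2] .
  also have "z1 \<bullet> (L *\<^sub>v z1) = z1 \<bullet> (Lt *\<^sub>v z1)"
    using Lt_mult_vec[OF z1] residual_orthogonal[OF z1 orth] orthogonal_residual[OF z1 orth Lz]
    by simp
  finally have z10: "z1 = 0\<^sub>v n"
    using psd_form_add_square_eq_0[OF Lt_carrier psd_Ltilde noise_pos z1] by simp
  then have "z2 = 0\<^sub>v m" using eq V_kernel[OF z2] Ls_carrier Vz by simp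
  with z10 show ?thesis using \<open>z = z1 @\<^sub>v z2\<close> by (simp add: zero_vec_append)
qed

lemma S_solution_unique:
  assumes z1: "z1 \<in> carrier_vec n" and z2: "z2 \<in> carrier_vec m"
    and eqs: "Ls *\<^sub>v z1 + V *\<^sub>v z2 = b1" "V\<^sup>T *\<^sub>v z1 = b2"
  shows "minv S *\<^sub>v (b1 @\<^sub>v b2) = z1 @\<^sub>v z2"
proof -
  have "b1 \<in> carrier_vec n"
    unfolding eqs(1)[symmetric] using Ls_carrier V_carrier z1 z2
    by (meson add_carrier_vec mult_mat_vec_carrier)
  then have "S *\<^sub>v (z1 @\<^sub>v z2) = b1 @\<^sub>v b2" using S_mult_append_eq[OF z1 z2] eqs by blast
  then show ?thesis using minv_mult_vec_eqI[OF S_carrier S_kernel] z1 z2 by simp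
qed

lemma S_solution:
  assumes b1: "b1 \<in> carrier_vec n" and b2: "b2 \<in> carrier_vec m"
  obtains z1 z2 where "z1 \<in> carrier_vec n" "z2 \<in> carrier_vec m"
    "minv S *\<^sub>v (b1 @\<^sub>v b2) = z1 @\<^sub>v z2" "Ls *\<^sub>v z1 + V *\<^sub>v z2 = b1" "V\<^sup>T *\<^sub>v z1 = b2"
proof -
  define z where "z = minv S *\<^sub>v (b1 @\<^sub>v b2)"
  define z1 z2 where "z1 = vec_first z n" and "z2 = vec_last z m"
  have z1: "z1 \<in> carrier_vec n" and z2: "z2 \<in> carrier_vec m" unfolding z1_def z2_def by auto
  have "z \<in> carrier_vec (n + m)" unfolding z_def using minv_carrier_mat[OF S_carrier] b1 b2 by simp
  then have z: "z = z1 @\<^sub>v z2" unfolding z1_def z2_def by simp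
  have "S *\<^sub>v z = b1 @\<^sub>v b2"
    unfolding z_def using mult_minv_mult_vec[OF S_carrier S_kernel] b1 b2 by simp
  then have "Ls *\<^sub>v z1 + V *\<^sub>v z2 = b1" "V\<^sup>T *\<^sub>v z1 = b2"
    using S_mult_append_eq[OF z1 z2 b1] z by simp_all
  then show ?thesis using that z1 z2 z unfolding z_def by blast
qed

lemma K_first_block:
  assumes z1: "z1 \<in> carrier_vec n" and z2: "z2 \<in> carrier_vec m"
    and eqs: "Ls *\<^sub>v z1 + V *\<^sub>v z2 = b" "V\<^sup>T *\<^sub>v z1 = 0\<^sub>v m"
  shows "K *\<^sub>v z1 = R *\<^sub>v b"
proof -
  have Lz1: "L *\<^sub>v z1 \<in> carrier_vec n" using L_carrier z1 by simp
  have Rz1: "R *\<^sub>v z1 = z1" using residual_orthogonal[OF z1 eqs(2)] .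
  have "R *\<^sub>v b = R *\<^sub>v (L *\<^sub>v z1) + R *\<^sub>v (s \<cdot>\<^sub>v z1) + R *\<^sub>v (V *\<^sub>v z2)"
    using eqs(1) add_smult_one_mult_vec[OF L_carrier z1] R_carrier V_carrier z1 z2 Lz1
    by (auto simp: mult_add_distrib_mat_vec)
  also have "\<dots> = K *\<^sub>v z1"
    using add_smult_one_mult_vec[OF Lt_carrier z1] Lt_mult_vec[OF z1] Rz1
      mult_mat_vec[OF R_carrier z1] residual_basis[OF z2] R_carrier Lz1 z1 by simp
  finally show ?thesis ..
qed

lemma Ltilde_proj: "a \<in> carrier_vec n \<Longrightarrow> Lt *\<^sub>v (P *\<^sub>v a) = 0\<^sub>v n"
  using Lt_mult_vec[of "P *\<^sub>v a"] residual_proj L_carrier R_carrier P_carrier by simp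

lemma smoother_mult_vec:
  assumes b: "b \<in> carrier_vec n" and z1: "z1 \<in> carrier_vec n" and z2: "z2 \<in> carrier_vec m"
    and eqs: "Ls *\<^sub>v z1 + V *\<^sub>v z2 = b" "V\<^sup>T *\<^sub>v z1 = 0\<^sub>v m"
  shows "smoother l vs xs s *\<^sub>v b = b - s \<cdot>\<^sub>v z1"
proof -
  define u where "u = minv K *\<^sub>v b"
  have u: "u \<in> carrier_vec n" unfolding u_def using minv_carrier_mat[OF K_carrier] b by simp
  have Ku: "K *\<^sub>v u = b" unfolding u_def using mult_minv_mult_vec[OF K_carrier K_kernel b] .
  have Pb: "P *\<^sub>v b \<in> carrier_vec n" using P_carrier b by simp
  have "K *\<^sub>v (P *\<^sub>v b) = s \<cdot>\<^sub>v (P *\<^sub>v b)"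
    using add_smult_one_mult_vec[OF Lt_carrier Pb] Ltilde_proj[OF b] Pb by simp
  then have "K *\<^sub>v (u - (1 / s) \<cdot>\<^sub>v (P *\<^sub>v b)) = R *\<^sub>v b"
    using Ku mult_minus_distrib_mat_vec[OF K_carrier u] mult_mat_vec[OF K_carrier Pb]
      residual_mult_vec[OF b] noise_pos Pb u by (simp add: smult_smult_assoc)
  then have z1_eq: "z1 = u - (1 / s) \<cdot>\<^sub>v (P *\<^sub>v b)"
    using minv_mult_vec_eqI[OF K_carrier K_kernel] K_first_block[OF z1 z2 eqs] z1 u Pb
    by (metis minus_carrier_vec smult_carrier_vec)
  have smoother_b: "smoother l vs xs s *\<^sub>v b = P *\<^sub>v b + Lt *\<^sub>v u"
    unfolding smoother_def u_def
    using add_mult_distrib_mat_vec[OF P_carrier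
        mult_carrier_mat[OF Lt_carrier minv_carrier_mat[OF K_carrier]] b]
      assoc_mult_mat_vec[OF Lt_carrier minv_carrier_mat[OF K_carrier] b] by simp
  show ?thesis
  proof (rule eq_vecI)
    fix i assume "i < dim_vec (b - s \<cdot>\<^sub>v z1)"
    then have i: "i < n" using z1 by simp
    have Ltu: "(Lt *\<^sub>v u) $ i = b $ i - s * u $ i"
      using arg_cong[OF Ku, of "\<lambda>v. v $ i"] add_smult_one_mult_vec[OF Lt_carrier u] Lt_carrier u i
      by simp
    have "(smoother l vs xs s *\<^sub>v b) $ i = (P *\<^sub>v b) $ i + (Lt *\<^sub>v u) $ i"
      unfolding smoother_b using P_carrier Lt_carrier b u i by simp
    also have "\<dots> = (b - s \<cdot>\<^sub>v z1) $ i"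
      unfolding Ltu z1_eq using noise_pos P_carrier b u i by (simp add: field_simps)
    finally show "(smoother l vs xs s *\<^sub>v b) $ i = (b - s \<cdot>\<^sub>v z1) $ i" .
  qed (use smoother_b Lt_carrier z1 in simp)
qed

lemma pred_mean_at_data:
  assumes ys: "length ys = n" and i: "i < n"
  shows "pred_mean l vs xs ys s (xs ! i) = (smoother l vs xs s *\<^sub>v vec_of_list ys) $ i"
proof -
  let ?b = "vec_of_list ys"
  have b: "?b \<in> carrier_vec n" unfolding carrier_vec_def using ys by simp
  have rhs: "vec (n + m) (\<lambda>k. if k < n then ys ! k else 0) = ?b @\<^sub>v 0\<^sub>v m"
    using ys by (intro eq_vecI) (auto simp: vec_of_list_index)
  obtain z1 z2 where z1: "z1 \<in> carrier_vec n" and z2: "z2 \<in> carrier_vec m"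
    and z: "minv S *\<^sub>v (?b @\<^sub>v 0\<^sub>v m) = z1 @\<^sub>v z2"
    and eqs: "Ls *\<^sub>v z1 + V *\<^sub>v z2 = ?b" "V\<^sup>T *\<^sub>v z1 = 0\<^sub>v m"
    using S_solution[OF b zero_carrier_vec] by blast
  have "pred_mean l vs xs ys s (xs ! i) = (row L i @\<^sub>v row V i) \<bullet> (z1 @\<^sub>v z2)"
    unfolding pred_mean_def rhs z lv_vec_at_data[OF i] ..
  also have "\<dots> = (L *\<^sub>v z1 + V *\<^sub>v z2) $ i"
    using scalar_prod_append[of "row L i" n "row V i" m] L_carrier V_carrier z1 z2 i by simp
  also have "\<dots> = (?b - s \<cdot>\<^sub>v z1) $ i"
    using arg_cong[OF eqs(1), of "\<lambda>v. v $ i"] add_smult_one_mult_vec[OF L_carrier z1]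
      L_carrier V_carrier z1 z2 i by simp
  also have "\<dots> = (smoother l vs xs s *\<^sub>v ?b) $ i"
    using smoother_mult_vec[OF b z1 z2 eqs] by simp
  finally show ?thesis .
qed

lemma smoother_carrier: "smoother l vs xs s \<in> carrier_mat n n"
  unfolding smoother_def
  using add_carrier_mat[OF mult_carrier_mat[OF Lt_carrier minv_carrier_mat[OF K_carrier]]] .

lemma spm_fit_scale_kernel: "g > 0 \<Longrightarrow> spm_fit vs xs (scale_kernel g l) (g * s)"
  using unisolvent psd_Ltilde_scale_kernel[OF psd_Ltilde, of g] noise_pos
  by unfold_locales auto

lemma pred_mean_scale_kernel:
  assumes g: "g > 0"
  shows "pred_mean (scale_kernel g l) vs xs ys (g * s) x = pred_mean l vs xs ys s x"
proof -
  interpret scaled: spm_fit vs xs "scale_kernel g l" "g * s"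
    using spm_fit_scale_kernel[OF g] .
  let ?b = "vec n (\<lambda>k. ys ! k)"
  let ?lx = "vec n (\<lambda>k. l x (xs ! k))" and ?vx = "vec m (\<lambda>j. (vs ! j) x)"
  obtain z1 z2 where z1: "z1 \<in> carrier_vec n" and z2: "z2 \<in> carrier_vec m"
    and z: "minv S *\<^sub>v (?b @\<^sub>v 0\<^sub>v m) = z1 @\<^sub>v z2"
    and eqs: "Ls *\<^sub>v z1 + V *\<^sub>v z2 = ?b" "V\<^sup>T *\<^sub>v z1 = 0\<^sub>v m"
    using S_solution[of ?b "0\<^sub>v m"] by auto
  have "minv scaled.S *\<^sub>v (?b @\<^sub>v 0\<^sub>v m) = ((1 / g) \<cdot>\<^sub>v z1) @\<^sub>v z2"
  proof (rule scaled.S_solution_unique)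
    show "(1 / g) \<cdot>\<^sub>v z1 \<in> carrier_vec n" "z2 \<in> carrier_vec m" using z1 z2 by auto
    show "scaled.Ls *\<^sub>v ((1 / g) \<cdot>\<^sub>v z1) + V *\<^sub>v z2 = ?b"
      unfolding shifted_kern_mat_scale_kernel
      using smult_mat_mult_vec[OF Ls_carrier] mult_mat_vec[OF Ls_carrier z1] eqs(1) g z1
      by (simp add: smult_smult_assoc)
    show "V\<^sup>T *\<^sub>v ((1 / g) \<cdot>\<^sub>v z1) = 0\<^sub>v m"
      using mult_mat_vec[OF Vt_carrier z1] eqs(2) by (auto intro!: eq_vecI)
  qed
  then have "pred_mean (scale_kernel g l) vs xs ys (g * s) x
      = ((g \<cdot>\<^sub>v ?lx) @\<^sub>v ?vx) \<bullet> (((1 / g) \<cdot>\<^sub>v z1) @\<^sub>v z2)"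
    unfolding pred_mean_def data_vec_append lv_vec_scale_kernel by simp
  also have "\<dots> = ?lx \<bullet> z1 + ?vx \<bullet> z2"
    using scalar_prod_append[of "g \<cdot>\<^sub>v ?lx" n ?vx m] z1 z2 g by simp
  also have "\<dots> = pred_mean l vs xs ys s x"
    unfolding pred_mean_def data_vec_append lv_vec_append z
    using scalar_prod_append[of ?lx n ?vx m] z1 z2 by simp
  finally show ?thesis .
qed

lemma pred_var_scale_kernel:
  assumes g: "g > 0"
  shows "pred_var (scale_kernel g l) vs xs (g * s) x = g * pred_var l vs xs s x"
proof -
  interpret scaled: spm_fit vs xs "scale_kernel g l" "g * s"
    using spm_fit_scale_kernel[OF g] .
  let ?lx = "vec n (\<lambda>k. l x (xs ! k))" and ?vx = "vec m (\<lambda>j. (vs ! j) x)"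
  obtain y1 y2 where y1: "y1 \<in> carrier_vec n" and y2: "y2 \<in> carrier_vec m"
    and y: "minv S *\<^sub>v (?lx @\<^sub>v ?vx) = y1 @\<^sub>v y2"
    and eqs: "Ls *\<^sub>v y1 + V *\<^sub>v y2 = ?lx" "V\<^sup>T *\<^sub>v y1 = ?vx"
    using S_solution[of ?lx ?vx] by auto
  have "minv scaled.S *\<^sub>v ((g \<cdot>\<^sub>v ?lx) @\<^sub>v ?vx) = y1 @\<^sub>v (g \<cdot>\<^sub>v y2)"
  proof (rule scaled.S_solution_unique)
    show "y1 \<in> carrier_vec n" "g \<cdot>\<^sub>v y2 \<in> carrier_vec m" using y1 y2 by auto
    have "Ls *\<^sub>v y1 \<in> carrier_vec n" "V *\<^sub>v y2 \<in> carrier_vec n"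
      using mult_mat_vec_carrier[OF Ls_carrier y1] mult_mat_vec_carrier[OF V_carrier y2] .
    then show "scaled.Ls *\<^sub>v y1 + V *\<^sub>v (g \<cdot>\<^sub>v y2) = g \<cdot>\<^sub>v ?lx"
      unfolding shifted_kern_mat_scale_kernel eqs(1)[symmetric]
      using smult_mat_mult_vec[OF Ls_carrier y1] mult_mat_vec[OF V_carrier y2]
      by (simp add: smult_add_distrib_vec)
  qed (use eqs(2) in simp)
  then have "pred_var (scale_kernel g l) vs xs (g * s) x
      = g * l x x - ((g \<cdot>\<^sub>v ?lx) @\<^sub>v ?vx) \<bullet> (y1 @\<^sub>v (g \<cdot>\<^sub>v y2))"
    unfolding pred_var_def lv_vec_scale_kernel by (simp add: scale_kernel_def)
  also have "\<dots> = g * (l x x - (?lx \<bullet> y1 + ?vx \<bullet> y2))"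
    using scalar_prod_append[of "g \<cdot>\<^sub>v ?lx" n ?vx m] y1 y2 by (simp add: algebra_simps)
  also have "\<dots> = g * pred_var l vs xs s x"
    unfolding pred_var_def lv_vec_append y
    using scalar_prod_append[of ?lx n ?vx m] y1 y2 by simp
  finally show ?thesis .
qed

end

lemma spm_fit_if_spm: "spm l vs \<Longrightarrow> unisolvent vs xs \<Longrightarrow> s > 0 \<Longrightarrow> spm_fit vs xs l s"
  by unfold_locales (auto simp: spm_def cond_psd_def)

lemma spm_equiv_scale_kernel:
  assumes l: "spm l vs" and l': "spm l' vs" and eq: "spm_equiv l vs l' vs" and g: "g > 0"
  shows "spm_equiv (scale_kernel g l) vs (scale_kernel g l') vs"
  unfolding spm_equiv_def
proof (intro conjI allI impI)
  fix xs :: "'a list" and ys :: "real list" and s2 :: real and x :: 'a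
  assume xs: "unisolvent vs xs" and "unisolvent vs xs" and ys: "length ys = length xs"
    and s2: "s2 > 0"
  interpret M: spm_fit vs xs l "s2 / g" using spm_fit_if_spm[OF l xs] s2 g by simp
  interpret M': spm_fit vs xs l' "s2 / g" using spm_fit_if_spm[OF l' xs] s2 g by simp
  have "pred_mean l vs xs ys (s2 / g) x = pred_mean l' vs xs ys (s2 / g) x"
    and "pred_var l vs xs (s2 / g) x = pred_var l' vs xs (s2 / g) x"
    using eq xs ys s2 g unfolding spm_equiv_def by auto
  moreover have "g * (s2 / g) = s2" using g by simp
  ultimately show "pred_mean (scale_kernel g l) vs xs ys s2 x = pred_mean (scale_kernel g l') vs xs ys s2 x"
    and "pred_var (scale_kernel g l) vs xs s2 x = pred_var (scale_kernel g l') vs xs s2 x"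
    using M.pred_mean_scale_kernel[OF g] M'.pred_mean_scale_kernel[OF g]
      M.pred_var_scale_kernel[OF g] M'.pred_var_scale_kernel[OF g] by metis+
qed simp

lemma smoother_eq_if_spm_equiv:
  assumes l: "spm l vs" and l': "spm l' vs" and eq: "spm_equiv l vs l' vs"
    and xs: "unisolvent vs xs" and s: "s > 0"
  shows "smoother l vs xs s = smoother l' vs xs s"
proof -
  interpret M: spm_fit vs xs l s using spm_fit_if_spm[OF l xs s] .
  interpret M': spm_fit vs xs l' s using spm_fit_if_spm[OF l' xs s] .
  show ?thesis
  proof (rule mat_eq_by_mult_vec[OF M.smoother_carrier M'.smoother_carrier])
    fix b :: "real Matrix.vec" assume b: "b \<in> carrier_vec (length xs)"
    then have ys: "length (list_of_vec b) = length xs" by simp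
    show "smoother l vs xs s *\<^sub>v b = smoother l' vs xs s *\<^sub>v b"
    proof (rule eq_vecI)
      fix i assume "i < dim_vec (smoother l' vs xs s *\<^sub>v b)"
      then have i: "i < length xs" using M'.smoother_carrier by simp
      show "(smoother l vs xs s *\<^sub>v b) $ i = (smoother l' vs xs s *\<^sub>v b) $ i"
        using M.pred_mean_at_data[OF ys i] M'.pred_mean_at_data[OF ys i] eq xs ys s
        unfolding spm_equiv_def vec_list by simp
    qed (use M.smoother_carrier M'.smoother_carrier in simp)
  qed
qed

lemma C_SURE_eq_if_spm_equiv:
  assumes "spm l vs" and "spm l' vs" and "spm_equiv l vs l' vs" and "unisolvent vs xs" and "s > 0"
  shows "C_SURE l vs xs ys s = C_SURE l' vs xs ys s"
  unfolding C_SURE_def smoother_eq_if_spm_equiv[OF assms] ..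

lemma loo_predictions_eq_if_spm_equiv:
  assumes "spm_equiv l vs l' vs" and "unisolvent vs (del_nth i xs)"
    and "length ys = length xs" and "s > 0"
  shows "pred_mean l vs (del_nth i xs) (del_nth i ys) s x
      = pred_mean l' vs (del_nth i xs) (del_nth i ys) s x"
    and "pred_var l vs (del_nth i xs) s x = pred_var l' vs (del_nth i xs) s x"
proof -
  have "length (del_nth i ys) = length (del_nth i xs)" using assms(3) by (simp add: del_nth_def)
  then show "pred_mean l vs (del_nth i xs) (del_nth i ys) s x
      = pred_mean l' vs (del_nth i xs) (del_nth i ys) s x"
    and "pred_var l vs (del_nth i xs) s x = pred_var l' vs (del_nth i xs) s x"
    using assms(1,2,4) unfolding spm_equiv_def by blast+
qed

lemma C_loo_eq_if_spm_equiv: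
  assumes "spm_equiv l vs l' vs" and "\<forall>i < length xs. unisolvent vs (del_nth i xs)"
    and "length ys = length xs" and "s > 0"
  shows "C_loo_mse l vs xs ys s = C_loo_mse l' vs xs ys s"
    and "C_loo_nll l vs xs ys s = C_loo_nll l' vs xs ys s"
  unfolding C_loo_mse_def C_loo_nll_def
  using loo_predictions_eq_if_spm_equiv[OF assms(1) _ assms(3,4)] assms(2)
  by (auto intro!: sum.cong)

lemma optimal_gamma_transfer:
  "optimal_gamma C g \<Longrightarrow> (\<And>h. h > 0 \<Longrightarrow> C h = C' h) \<Longrightarrow> optimal_gamma C' g"
  unfolding optimal_gamma_def by auto

theorem mainTheorem6:
  fixes l l' :: "'a \<Rightarrow> 'a \<Rightarrow> real" and vs :: "('a \<Rightarrow> real) list"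
    and xs :: "'a list" and ys :: "real list" and s2 :: real
  assumes "spm l vs" and "spm l' vs" and "spm_equiv l vs l' vs"
    and "unisolvent vs xs" and "length ys = length xs" and "s2 > 0"
  shows
    "(\<forall>g>0. C_SURE (scale_kernel g l) vs xs ys s2 = C_SURE (scale_kernel g l') vs xs ys s2)
   \<and> (\<forall>g. optimal_gamma (\<lambda>h. C_SURE (scale_kernel h l) vs xs ys s2) g \<longrightarrow>
          optimal_gamma (\<lambda>h. C_SURE (scale_kernel h l') vs xs ys s2) g
          \<and> spm_equiv (scale_kernel g l) vs (scale_kernel g l') vs)
   \<and> ((\<forall>i<length xs. unisolvent vs (del_nth i xs)) \<longrightarrow>
       (\<forall>g>0. C_loo_mse (scale_kernel g l) vs xs ys s2 = C_loo_mse (scale_kernel g l') vs xs ys s2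
            \<and> C_loo_nll (scale_kernel g l) vs xs ys s2 = C_loo_nll (scale_kernel g l') vs xs ys s2)
     \<and> (\<forall>g. optimal_gamma (\<lambda>h. C_loo_mse (scale_kernel h l) vs xs ys s2) g \<longrightarrow>
          optimal_gamma (\<lambda>h. C_loo_mse (scale_kernel h l') vs xs ys s2) g
          \<and> spm_equiv (scale_kernel g l) vs (scale_kernel g l') vs)
     \<and> (\<forall>g. optimal_gamma (\<lambda>h. C_loo_nll (scale_kernel h l) vs xs ys s2) g \<longrightarrow>
          optimal_gamma (\<lambda>h. C_loo_nll (scale_kernel h l') vs xs ys s2) g
          \<and> spm_equiv (scale_kernel g l) vs (scale_kernel g l') vs))"
proof -
  have equiv: "spm_equiv (scale_kernel g l) vs (scale_kernel g l') vs" if "g > 0" for g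
    using spm_equiv_scale_kernel[OF assms(1-3) that] .
  have sure: "C_SURE (scale_kernel g l) vs xs ys s2 = C_SURE (scale_kernel g l') vs xs ys s2"
    if "g > 0" for g
    using C_SURE_eq_if_spm_equiv[OF spm_scale_kernel[OF assms(1) that]
        spm_scale_kernel[OF assms(2) that] equiv[OF that] assms(4,6)] .
  have loo: "C_loo_mse (scale_kernel g l) vs xs ys s2 = C_loo_mse (scale_kernel g l') vs xs ys s2"
    "C_loo_nll (scale_kernel g l) vs xs ys s2 = C_loo_nll (scale_kernel g l') vs xs ys s2"
    if "\<forall>i<length xs. unisolvent vs (del_nth i xs)" and "g > 0" for g
    using C_loo_eq_if_spm_equiv[OF equiv[OF that(2)] that(1) assms(5,6)] by auto
  have optimal_equiv: "optimal_gamma C g \<Longrightarrow> spm_equiv (scale_kernel g l) vs (scale_kernel g l') vs"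
    for C g
    using equiv unfolding optimal_gamma_def by blast
  show ?thesis
    using sure loo optimal_equiv by (auto intro: optimal_gamma_transfer)
qed

end
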